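(* Let $\beta>0$, $C>0$, and let $\{a_j\}_{j\ge1}$ be a monotone non-increasing sequence with $0\le a_j\le C\,j^{-1-\beta}$ for all $j$. Then for any positive integers $k,m$ and any $\nu\in[1,1+\beta)$, $$\sum_{j=m}^\infty[a_j-a_{j+k}]\,j^\nu\le C\,k\,\frac{\beta+1}{\beta+1-\nu}\,m^{\nu-1-\beta}<\infty.$$ *)

theory Defs
  imports "HOL-Analysis.Analysis"
begin

end

theory Submission imports Defs begin

text \<open>
  For \<open>k = 1\<close>, summation by parts rewrites \<open>\<Sum>j\<ge>m. (a j - a (j+1)) j\<^sup>\<nu>\<close> as
  \<open>a m m\<^sup>\<nu> + \<Sum>j\<ge>m. a (j+1) ((j+1)\<^sup>\<nu> - j\<^sup>\<nu>)\<close> (dropping a nonnegative boundary term).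
  By the mean value theorem the new terms are at most \<open>C \<nu> (j+1)\<^sup>\<nu>\<^sup>-\<^sup>2\<^sup>-\<^sup>\<beta>\<close>, which is in
  turn at most the telescoping difference \<open>C \<nu> / s (j\<^sup>-\<^sup>s - (j+1)\<^sup>-\<^sup>s)\<close> with \<open>s = \<beta> + 1 - \<nu> > 0\<close>;
  summing gives \<open>C (1 + \<nu>/s) m\<^sup>-\<^sup>s = C (\<beta>+1)/s m\<^sup>-\<^sup>s\<close>.
  For general \<open>k\<close>, \<open>a j - a (j+k)\<close> splits into \<open>k\<close> one-step differences, and since \<open>j\<^sup>\<nu>\<close> is
  increasing each of the \<open>k\<close> resulting sums is dominated by a one-step sum starting at \<open>m\<close>.
\<close>

lemma sum_diff_mult_by_parts:
  fixes a w :: "nat \<Rightarrow> 'a::comm_ring"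
  assumes "m \<le> n"
  shows "(\<Sum>i=m..<n. (a i - a (Suc i)) * w i) + a n * w n
    = a m * w m + (\<Sum>i=m..<n. a (Suc i) * (w (Suc i) - w i))"
  using assms by (induction n rule: dec_induct) (simp_all add: algebra_simps)

lemma powr_Suc_diff_le:
  fixes x \<nu> :: real
  assumes "x > 0" "\<nu> \<ge> 1"
  shows "(x + 1) powr \<nu> - x powr \<nu> \<le> \<nu> * (x + 1) powr (\<nu> - 1)"
proof -
  have "\<exists>z. x < z \<and> z < x + 1 \<and>
      (x + 1) powr \<nu> - x powr \<nu> = (x + 1 - x) * (\<nu> * z powr (\<nu> - 1))"
    using assms by (intro MVT2) (auto intro!: has_real_derivative_powr)
  then obtain z where z: "x < z" "z < x + 1" "(x + 1) powr \<nu> - x powr \<nu> = \<nu> * z powr (\<nu> - 1)"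
    by auto
  have "z powr (\<nu> - 1) \<le> (x + 1) powr (\<nu> - 1)"
    using z assms by (intro powr_mono2) auto
  then show ?thesis
    using z assms by (simp add: mult_left_mono)
qed

lemma powr_neg_diff_Suc_ge:
  fixes x s :: real
  assumes "x > 0" "s > 0"
  shows "s * (x + 1) powr (-s - 1) \<le> x powr (-s) - (x + 1) powr (-s)"
proof -
  have "\<exists>z. x < z \<and> z < x + 1 \<and>
      (x + 1) powr (-s) - x powr (-s) = (x + 1 - x) * ((-s) * z powr (-s - 1))"
  proof (rule MVT2)
    fix t assume "x \<le> t" "t \<le> x + 1"
    then show "((\<lambda>z. z powr (-s)) has_real_derivative (-s) * t powr (-s - 1)) (at t)"
      using assms by (intro has_real_derivative_powr) auto
  qed simp
  then obtain z where z: "x < z" "z < x + 1" "(x + 1) powr (-s) - x powr (-s) = - s * z powr (-s - 1)"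
    by auto
  have "(x + 1) powr (-s - 1) \<le> z powr (-s - 1)"
    using z assms by (intro powr_mono2') auto
  then have "s * (x + 1) powr (-s - 1) \<le> s * z powr (-s - 1)"
    using assms by (simp add: mult_left_mono)
  then show ?thesis
    using z(3) by linarith
qed

lemma sum_diff_Suc_mult_powr_le:
  fixes a :: "nat \<Rightarrow> real" and \<beta> C \<nu> :: real and m n :: nat
  assumes "C > 0"
    and nonneg: "\<And>j. j \<ge> 1 \<Longrightarrow> 0 \<le> a j"
    and bound: "\<And>j. j \<ge> 1 \<Longrightarrow> a j \<le> C * real j powr (-1 - \<beta>)"
    and "m \<ge> 1" and "1 \<le> \<nu>" and "\<nu> < 1 + \<beta>"
  shows "(\<Sum>i=m..<n. (a i - a (Suc i)) * real i powr \<nu>)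
    \<le> C * ((\<beta> + 1) / (\<beta> + 1 - \<nu>)) * real m powr (\<nu> - 1 - \<beta>)"
proof (cases "m \<le> n")
  case False
  then show ?thesis using assms by simp
next
  case True
  define s where "s = \<beta> + 1 - \<nu>"
  have s: "s > 0" using assms by (simp add: s_def)
  have step: "a (Suc i) * (real (Suc i) powr \<nu> - real i powr \<nu>)
      \<le> C * \<nu> / s * (real i powr (-s) - real (Suc i) powr (-s))" if "i \<ge> 1" for i
  proof -
    have "a (Suc i) * (real (Suc i) powr \<nu> - real i powr \<nu>)
        \<le> C * real (Suc i) powr (-1 - \<beta>) * (\<nu> * real (Suc i) powr (\<nu> - 1))"
      using bound[of "Suc i"] powr_Suc_diff_le[of "real i" \<nu>] that assms
      by (intro mult_mono) (auto simp: add.commute powr_mono2)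
    also have "\<dots> = C * \<nu> / s * (s * real (Suc i) powr (-s - 1))"
      using s by (simp add: s_def powr_add[symmetric] mult_ac)
    also have "\<dots> \<le> C * \<nu> / s * (real i powr (-s) - real (Suc i) powr (-s))"
      using powr_neg_diff_Suc_ge[of "real i" s] that s assms
      by (intro mult_left_mono) (auto simp: add.commute)
    finally show ?thesis .
  qed
  have telescope: "(\<Sum>i=m..<n. real i powr (-s) - real (Suc i) powr (-s))
      = real m powr (-s) - real n powr (-s)"
    using sum_Suc_diff'[OF True, of "\<lambda>i. - (real i powr (-s))"] by simp
  have "(\<Sum>i=m..<n. (a i - a (Suc i)) * real i powr \<nu>)
      \<le> (\<Sum>i=m..<n. (a i - a (Suc i)) * real i powr \<nu>) + a n * real n powr \<nu>"
    using nonneg[of n] True assms by simp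
  also have "\<dots> = a m * real m powr \<nu> + (\<Sum>i=m..<n. a (Suc i) * (real (Suc i) powr \<nu> - real i powr \<nu>))"
    by (rule sum_diff_mult_by_parts[OF True])
  also have "\<dots> \<le> C * real m powr (-s) + (\<Sum>i=m..<n. C * \<nu> / s * (real i powr (-s) - real (Suc i) powr (-s)))"
  proof (rule add_mono)
    have "a m * real m powr \<nu> \<le> C * real m powr (-1 - \<beta>) * real m powr \<nu>"
      using bound[of m] assms by (intro mult_right_mono) auto
    also have "\<dots> = C * real m powr (-s)"
      by (simp add: s_def mult.assoc powr_add[symmetric] algebra_simps)
    finally show "a m * real m powr \<nu> \<le> C * real m powr (-s)" .
    show "(\<Sum>i=m..<n. a (Suc i) * (real (Suc i) powr \<nu> - real i powr \<nu>))
        \<le> (\<Sum>i=m..<n. C * \<nu> / s * (real i powr (-s) - real (Suc i) powr (-s)))"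
      using step assms by (intro sum_mono) auto
  qed
  also have "\<dots> = C * real m powr (-s) + C * \<nu> / s * (real m powr (-s) - real n powr (-s))"
    unfolding sum_distrib_left[symmetric] telescope ..
  also have "\<dots> \<le> C * real m powr (-s) + C * \<nu> / s * real m powr (-s)"
    using s assms by (intro add_left_mono mult_left_mono) auto
  also have "\<dots> = C * ((\<beta> + 1) / (\<beta> + 1 - \<nu>)) * real m powr (\<nu> - 1 - \<beta>)"
    using s by (simp add: s_def field_simps)
  finally show ?thesis .
qed

lemma sum_diff_add_mult_le:
  fixes a w :: "nat \<Rightarrow> real"
  assumes antimono: "\<And>j. j \<ge> m \<Longrightarrow> a (Suc j) \<le> a j"
    and w_mono: "\<And>i j. m \<le> i \<Longrightarrow> i \<le> j \<Longrightarrow> w i \<le> w j"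
    and w_nonneg: "\<And>j. j \<ge> m \<Longrightarrow> 0 \<le> w j"
    and one_step: "\<And>n. (\<Sum>i=m..<n. (a i - a (Suc i)) * w i) \<le> B"
  shows "(\<Sum>j=m..<n. (a j - a (j + k)) * w j) \<le> real k * B"
proof -
  define b where "b i = (a i - a (Suc i)) * w i" for i
  have b_nonneg: "0 \<le> b i" if "i \<ge> m" for i
    using antimono[OF that] w_nonneg[OF that] by (simp add: b_def)
  have "(\<Sum>j=m..<n. (a j - a (j + k)) * w j)
      = (\<Sum>j=m..<n. \<Sum>l<k. (a (j + l) - a (Suc (j + l))) * w j)"
  proof (rule sum.cong[OF refl])
    fix j
    have "(\<Sum>l<k. a (j + l) - a (Suc (j + l))) = a j - a (j + k)"
      using sum_lessThan_telescope'[of "\<lambda>l. a (j + l)" k] by simp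
    then show "(a j - a (j + k)) * w j = (\<Sum>l<k. (a (j + l) - a (Suc (j + l))) * w j)"
      by (simp add: sum_distrib_right[symmetric])
  qed
  also have "\<dots> = (\<Sum>l<k. \<Sum>j=m..<n. (a (j + l) - a (Suc (j + l))) * w j)"
    by (rule sum.swap)
  also have "\<dots> \<le> (\<Sum>l<k. \<Sum>j=m..<n. b (j + l))"
    unfolding b_def using antimono w_mono
    by (intro sum_mono mult_left_mono) auto
  also have "\<dots> = (\<Sum>l<k. \<Sum>i=m+l..<n+l. b i)"
    by (simp add: sum.shift_bounds_nat_ivl)
  also have "\<dots> \<le> (\<Sum>l<k. \<Sum>i=m..<n+l. b i)"
    using b_nonneg by (intro sum_mono sum_mono2) auto
  also have "\<dots> \<le> (\<Sum>l<k. B)"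
    using one_step by (intro sum_mono) (simp add: b_def)
  finally show ?thesis by simp
qed

theorem lemma1p9:
  fixes a :: "nat \<Rightarrow> real" and \<beta> C \<nu> :: real and k m :: nat
  assumes "\<beta> > 0" and "C > 0"
    and mono: "\<And>j. j \<ge> 1 \<Longrightarrow> a (Suc j) \<le> a j"
    and nonneg: "\<And>j. j \<ge> 1 \<Longrightarrow> 0 \<le> a j"
    and bound: "\<And>j. j \<ge> 1 \<Longrightarrow> a j \<le> C * real j powr (-1 - \<beta>)"
    and "k \<ge> 1" and "m \<ge> 1"
    and "1 \<le> \<nu>" and "\<nu> < 1 + \<beta>"
  shows "summable (\<lambda>i. (a (i + m) - a (i + m + k)) * real (i + m) powr \<nu>)
    \<and> (\<Sum>i. (a (i + m) - a (i + m + k)) * real (i + m) powr \<nu>)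
        \<le> C * real k * ((\<beta> + 1) / (\<beta> + 1 - \<nu>)) * real m powr (\<nu> - 1 - \<beta>)"
proof -
  define B where "B = C * ((\<beta> + 1) / (\<beta> + 1 - \<nu>)) * real m powr (\<nu> - 1 - \<beta>)"
  define f where "f = (\<lambda>i. (a (i + m) - a (i + m + k)) * real (i + m) powr \<nu>)"
  have f_nonneg: "0 \<le> f i" for i
  proof -
    have "a (i + m + k) \<le> a (i + m)"
      by (rule lift_Suc_antimono_le_ivl[of "{1..}"]) (use mono \<open>m \<ge> 1\<close> in auto)
    then show ?thesis by (simp add: f_def)
  qed
  have partial_sums: "(\<Sum>i<N. f i) \<le> real k * B" for N
  proof -
    have "(\<Sum>i<N. f i) = (\<Sum>j=m..<N+m. (a j - a (j + k)) * real j powr \<nu>)"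
      using sum.shift_bounds_nat_ivl[of "\<lambda>j. (a j - a (j + k)) * real j powr \<nu>" 0 m N]
      by (simp add: f_def atLeast0LessThan add.commute)
    also have "\<dots> \<le> real k * B"
      using assms sum_diff_Suc_mult_powr_le[of C a \<beta> m \<nu>] unfolding B_def
      by (intro sum_diff_add_mult_le) (auto intro: powr_mono2)
    finally show ?thesis .
  qed
  have "summable f"
    by (rule summableI_nonneg_bounded[OF f_nonneg partial_sums])
  moreover have "suminf f \<le> real k * B"
    by (rule suminf_le_const[OF \<open>summable f\<close> partial_sums])
  ultimately show ?thesis
    unfolding f_def B_def by (simp add: mult_ac)
qed

end
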